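(* Let $(V,E)$ be a finite graph and $p\in[0,1]$. Define rates on $\{0,1\}^E\times\{-1,1\}^V$ as follows: if there exists $x\in V$ such that $\sigma'=\sigma^x$ and $\eta'(e)=\eta(e)$ for all $e\in E\setminus E_x$, then $c((\eta,\sigma),(\eta',\sigma'))=(1-p)^{|\{e\in E_x:\eta'(e)=0\}|}p^{|\{e\in E_x:\eta'(e)=1\}|}\mathbf 1_{(\eta',\sigma')\in\mathcal C_x}$; otherwise, for $(\eta,\sigma)\ne(\eta',\sigma')$, the rate is $0$; and $c((\eta,\sigma),(\eta,\sigma))=-\sum_{(\eta',\sigma')\ne(\eta,\sigma)}c((\eta,\sigma),(\eta',\sigma'))$. Then for any $\eta\in\{0,1\}^E$ and $\sigma,\sigma'\in\{-1,1\}^V$, the sum $\sum_{\eta'\in\{0,1\}^E}c((\eta,\sigma),(\eta',\sigma'))$ does not depend on $\eta$ and equals $$c(\sigma,\sigma')=\begin{cases}(1-p)^{|\{e\in E_x:\delta_\sigma(e)=1\}|}&\text{if }\sigma'=\sigma^x,\\ -\sum_{x\in V}(1-p)^{|\{e\in E_x:\delta_\sigma(e)=1\}|}&\text{if }\sigma'=\sigma,\\ 0&\text{otherwise.}\end{cases}$$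
   Context: Edge configurations $\eta\in\{0,1\}^E$, spin configurations $\sigma\in\{-1,1\}^V$. For $e=\langle x,y\rangle$, $\delta_\sigma(e)=\mathbf 1_{\sigma(x)=\sigma(y)}$. $E_x$ is the set of edges with endvertex $x$; $\sigma^x$ is $\sigma$ with the spin at $x$ flipped. $\mathcal C_x=\{(\eta,\sigma):\eta(e)\le\delta_\sigma(e)\text{ for all }e\in E_x\}$. *)

theory Defs
  imports "HOL-Library.FuncSet" Complex_Main
begin

definition finite_graph :: "'v set \<Rightarrow> 'v set set \<Rightarrow> bool" where
  "finite_graph V E \<longleftrightarrow> finite V \<and> (\<forall>e\<in>E. e \<subseteq> V \<and> card e = 2)"

definition edge_configs :: "'v set set \<Rightarrow> ('v set \<Rightarrow> nat) set" where
  "edge_configs E = E \<rightarrow>\<^sub>E {0, 1}"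

definition spin_configs :: "'v set \<Rightarrow> ('v \<Rightarrow> int) set" where
  "spin_configs V = V \<rightarrow>\<^sub>E {-1, 1}"

definition configs :: "'v set \<Rightarrow> 'v set set \<Rightarrow> (('v set \<Rightarrow> nat) \<times> ('v \<Rightarrow> int)) set" where
  "configs V E = edge_configs E \<times> spin_configs V"

definition delta :: "('v \<Rightarrow> int) \<Rightarrow> 'v set \<Rightarrow> nat" where
  "delta \<sigma> e = (if \<forall>u\<in>e. \<forall>w\<in>e. \<sigma> u = \<sigma> w then 1 else 0)"

definition edges_at :: "'v set set \<Rightarrow> 'v \<Rightarrow> 'v set set" where
  "edges_at E x = {e \<in> E. x \<in> e}"

definition flip :: "('v \<Rightarrow> int) \<Rightarrow> 'v \<Rightarrow> ('v \<Rightarrow> int)" where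
  "flip \<sigma> x = \<sigma>(x := - \<sigma> x)"

definition Cx :: "'v set set \<Rightarrow> 'v \<Rightarrow> (('v set \<Rightarrow> nat) \<times> ('v \<Rightarrow> int)) set" where
  "Cx E x = {(\<eta>, \<sigma>). \<forall>e\<in>edges_at E x. \<eta> e \<le> delta \<sigma> e}"

definition single_move :: "'v set \<Rightarrow> 'v set set \<Rightarrow> ('v set \<Rightarrow> nat) \<times> ('v \<Rightarrow> int)
     \<Rightarrow> ('v set \<Rightarrow> nat) \<times> ('v \<Rightarrow> int) \<Rightarrow> 'v \<Rightarrow> bool" where
  "single_move V E s s' x \<longleftrightarrow> x \<in> V \<and> snd s' = flip (snd s) x \<and>
      (\<forall>e \<in> E - edges_at E x. fst s' e = fst s e)"

definition rate_off :: "real \<Rightarrow> 'v set \<Rightarrow> 'v set set \<Rightarrow> ('v set \<Rightarrow> nat) \<times> ('v \<Rightarrow> int)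
     \<Rightarrow> ('v set \<Rightarrow> nat) \<times> ('v \<Rightarrow> int) \<Rightarrow> real" where
  "rate_off p V E s s' =
     (if \<exists>x. single_move V E s s' x then
        (let x = (THE x. single_move V E s s' x) in
          (1 - p) ^ card {e \<in> edges_at E x. fst s' e = 0} *
          p ^ card {e \<in> edges_at E x. fst s' e = 1} *
          (if s' \<in> Cx E x then 1 else 0))
      else 0)"

definition rate :: "real \<Rightarrow> 'v set \<Rightarrow> 'v set set \<Rightarrow> ('v set \<Rightarrow> nat) \<times> ('v \<Rightarrow> int)
     \<Rightarrow> ('v set \<Rightarrow> nat) \<times> ('v \<Rightarrow> int) \<Rightarrow> real" where
  "rate p V E s s' =
     (if s' = s then - (\<Sum>t \<in> configs V E - {s}. rate_off p V E s t)
      else rate_off p V E s s')"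

definition spin_rate :: "real \<Rightarrow> 'v set \<Rightarrow> 'v set set \<Rightarrow> ('v \<Rightarrow> int) \<Rightarrow> ('v \<Rightarrow> int) \<Rightarrow> real" where
  "spin_rate p V E \<sigma> \<sigma>' =
     (if \<sigma>' = \<sigma> then - (\<Sum>x\<in>V. (1 - p) ^ card {e \<in> edges_at E x. delta \<sigma> e = 1})
      else if \<exists>x\<in>V. \<sigma>' = flip \<sigma> x then
        (let x = (THE x. x \<in> V \<and> \<sigma>' = flip \<sigma> x) in
          (1 - p) ^ card {e \<in> edges_at E x. delta \<sigma> e = 1})
      else 0)"

end

theory Submission
  imports Defs
begin

(* Only moves flipping a single spin x have positive rate, and the move from (\<eta>, \<sigma>) to
   (\<eta>', flip \<sigma> x) requires \<eta>' to agree with \<eta> off E_x. Summing over \<eta>' thus amounts to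
   summing over the values of \<eta>' on E_x, and there the rate factorises over the edges, so the
   sum is the product over e in E_x of (1 - p) + p * delta (flip \<sigma> x) e. Flipping x toggles
   delta on every edge at x, hence each factor is (1 - p) ^ delta \<sigma> e. The diagonal entry is
   minus the sum of these contributions over all x. *)

lemma power_card_mult_indicator_eq_prod:
  fixes p :: real and h d :: "'a \<Rightarrow> nat"
  assumes "finite S" "\<And>e. e \<in> S \<Longrightarrow> h e = 0 \<or> h e = 1"
  shows "(1 - p) ^ card {e \<in> S. h e = 0} * p ^ card {e \<in> S. h e = 1} *
      (if \<forall>e\<in>S. h e \<le> d e then 1 else 0) =
    (\<Prod>e\<in>S. if h e = 0 then 1 - p else if 1 \<le> d e then p else 0)"
proof -
  let ?S0 = "{e \<in> S. h e = 0}" and ?S1 = "{e \<in> S. h e = 1}"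
  have "S \<inter> {e. h e = 0} = ?S0" "S \<inter> - {e. h e = 0} = ?S1"
    using assms(2) by fastforce+
  then have "(\<Prod>e\<in>S. if h e = 0 then 1 - p else if 1 \<le> d e then p else 0) =
      (1 - p) ^ card ?S0 * (\<Prod>e\<in>?S1. if 1 \<le> d e then p else 0)"
    using assms(1) by (simp add: prod.If_cases)
  also have "(\<Prod>e\<in>?S1. if 1 \<le> d e then p else 0) = (if \<forall>e\<in>?S1. 1 \<le> d e then p ^ card ?S1 else 0)"
  proof (cases "\<forall>e\<in>?S1. 1 \<le> d e")
    case True
    then show ?thesis by simp
  next
    case False
    then show ?thesis using assms(1) by (subst prod_zero) auto
  qed
  also have "(\<forall>e\<in>?S1. 1 \<le> d e) \<longleftrightarrow> (\<forall>e\<in>S. h e \<le> d e)"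
    using assms(2) by force
  finally show ?thesis by simp
qed

lemma sum_PiE_agreeing_off:
  assumes "F \<subseteq> E" "\<eta> \<in> E \<rightarrow>\<^sub>E B"
  shows "(\<Sum>\<eta>'\<in>{\<eta>' \<in> E \<rightarrow>\<^sub>E B. \<forall>e\<in>E - F. \<eta>' e = \<eta> e}. g \<eta>') =
    (\<Sum>h\<in>F \<rightarrow>\<^sub>E B. g (override_on \<eta> h F))"
proof -
  have "bij_betw (\<lambda>h. override_on \<eta> h F) (F \<rightarrow>\<^sub>E B) {\<eta>' \<in> E \<rightarrow>\<^sub>E B. \<forall>e\<in>E - F. \<eta>' e = \<eta> e}"
  proof (rule bij_betw_byWitness[where f' = "\<lambda>\<eta>'. restrict \<eta>' F"])
    show "\<forall>\<eta>'\<in>{\<eta>' \<in> E \<rightarrow>\<^sub>E B. \<forall>e\<in>E - F. \<eta>' e = \<eta> e}. override_on \<eta> (restrict \<eta>' F) F = \<eta>'"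
      using assms(2) by (auto simp: override_on_def fun_eq_iff) (metis Diff_iff PiE_arb)
  qed (use assms in \<open>auto simp: override_on_def PiE_iff extensional_def\<close>)
  then show ?thesis
    by (rule sum.reindex_bij_betw[symmetric])
qed

lemma finite_graph_finite_edges: "finite_graph V E \<Longrightarrow> finite E"
  unfolding finite_graph_def by (meson Pow_iff finite_Pow_iff finite_subset subsetI)

lemma finite_edge_configs: "finite_graph V E \<Longrightarrow> finite (edge_configs E)"
  using finite_graph_finite_edges unfolding edge_configs_def by (blast intro: finite_PiE)

lemma finite_spin_configs: "finite V \<Longrightarrow> finite (spin_configs V)"
  unfolding spin_configs_def by (intro finite_PiE) auto

lemma finite_configs: "finite_graph V E \<Longrightarrow> finite (configs V E)"
  using finite_edge_configs[of V E] finite_spin_configs[of V]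
  unfolding configs_def finite_graph_def by blast

lemma edge_configs_value: "\<eta> \<in> edge_configs E \<Longrightarrow> e \<in> E \<Longrightarrow> \<eta> e = 0 \<or> \<eta> e = 1"
  unfolding edge_configs_def by auto

lemma spin_configs_value: "\<sigma> \<in> spin_configs V \<Longrightarrow> x \<in> V \<Longrightarrow> \<sigma> x = 1 \<or> \<sigma> x = -1"
  unfolding spin_configs_def by (auto simp: PiE_iff)

lemma flip_neq: "\<sigma> \<in> spin_configs V \<Longrightarrow> x \<in> V \<Longrightarrow> flip \<sigma> x \<noteq> \<sigma>"
  using spin_configs_value[of \<sigma> V x] by (auto simp: flip_def fun_eq_iff)

lemma flip_in_spin_configs: "\<sigma> \<in> spin_configs V \<Longrightarrow> x \<in> V \<Longrightarrow> flip \<sigma> x \<in> spin_configs V"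
  unfolding spin_configs_def flip_def by (auto simp: PiE_iff extensional_def)

lemma flip_eq_flip_iff:
  assumes "\<sigma> \<in> spin_configs V" "x \<in> V"
  shows "flip \<sigma> x = flip \<sigma> y \<longleftrightarrow> x = y"
  using spin_configs_value[OF assms] by (auto simp: flip_def fun_eq_iff)

lemma inj_on_flip: "\<sigma> \<in> spin_configs V \<Longrightarrow> inj_on (flip \<sigma>) V"
  by (auto simp: inj_on_def flip_eq_flip_iff)

lemma delta_flip:
  assumes "\<sigma> \<in> spin_configs V" "e \<subseteq> V" "card e = 2" "x \<in> e"
  shows "delta (flip \<sigma> x) e = 1 - delta \<sigma> e"
proof -
  obtain y where e: "e = {x, y}" "y \<noteq> x"
    using assms(3,4) by (metis card_2_iff insert_commute insertE singletonD)
  then have "x \<in> V" "y \<in> V"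
    using assms(2) by auto
  then have "\<sigma> x = 1 \<or> \<sigma> x = -1" "\<sigma> y = 1 \<or> \<sigma> y = -1"
    using spin_configs_value[OF assms(1)] by auto
  moreover have "delta \<sigma> e = (if \<sigma> x = \<sigma> y then 1 else 0)"
    "delta (flip \<sigma> x) e = (if - \<sigma> x = \<sigma> y then 1 else 0)"
    using e by (auto simp: delta_def flip_def)
  ultimately show ?thesis
    by auto
qed

lemma single_move_to_flip_iff:
  assumes "\<sigma> \<in> spin_configs V" "x \<in> V"
  shows "single_move V E (\<eta>, \<sigma>) (\<eta>', flip \<sigma> x) y \<longleftrightarrow>
    y = x \<and> (\<forall>e\<in>E - edges_at E x. \<eta>' e = \<eta> e)"
  using assms(2) by (auto simp: single_move_def flip_eq_flip_iff[OF assms])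

lemma rate_off_to_flip:
  assumes "\<sigma> \<in> spin_configs V" "x \<in> V"
  shows "rate_off p V E (\<eta>, \<sigma>) (\<eta>', flip \<sigma> x) =
    (if \<forall>e\<in>E - edges_at E x. \<eta>' e = \<eta> e then
       (1 - p) ^ card {e \<in> edges_at E x. \<eta>' e = 0} * p ^ card {e \<in> edges_at E x. \<eta>' e = 1} *
       (if \<forall>e\<in>edges_at E x. \<eta>' e \<le> delta (flip \<sigma> x) e then 1 else 0)
     else 0)"
  unfolding rate_off_def single_move_to_flip_iff[OF assms] Cx_def by auto

lemma rate_off_not_flip:
  "\<not> (\<exists>x\<in>V. \<sigma>' = flip \<sigma> x) \<Longrightarrow> rate_off p V E (\<eta>, \<sigma>) (\<eta>', \<sigma>') = 0"
  unfolding rate_off_def single_move_def by auto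

lemma sum_rate_off_to_flip:
  assumes G: "finite_graph V E" and \<eta>: "\<eta> \<in> edge_configs E"
    and \<sigma>: "\<sigma> \<in> spin_configs V" and x: "x \<in> V"
  shows "(\<Sum>\<eta>'\<in>edge_configs E. rate_off p V E (\<eta>, \<sigma>) (\<eta>', flip \<sigma> x)) =
    (1 - p) ^ card {e \<in> edges_at E x. delta \<sigma> e = 1}"
proof -
  let ?Ex = "edges_at E x"
  define w where "w e v = (if v = 0 then 1 - p else if 1 \<le> delta (flip \<sigma> x) e then p else 0)"
    for e and v :: nat
  have Ex: "?Ex \<subseteq> E" "finite ?Ex"
    using finite_graph_finite_edges[OF G] by (auto simp: edges_at_def)
  have "(\<Sum>\<eta>'\<in>edge_configs E. rate_off p V E (\<eta>, \<sigma>) (\<eta>', flip \<sigma> x)) =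
      (\<Sum>\<eta>'\<in>edge_configs E. if \<forall>e\<in>E - ?Ex. \<eta>' e = \<eta> e then \<Prod>e\<in>?Ex. w e (\<eta>' e) else 0)"
  proof (rule sum.cong[OF refl])
    fix \<eta>' assume "\<eta>' \<in> edge_configs E"
    then have "\<eta>' e = 0 \<or> \<eta>' e = 1" if "e \<in> ?Ex" for e
      using that Ex(1) by (auto dest: edge_configs_value)
    then show "rate_off p V E (\<eta>, \<sigma>) (\<eta>', flip \<sigma> x) =
        (if \<forall>e\<in>E - ?Ex. \<eta>' e = \<eta> e then \<Prod>e\<in>?Ex. w e (\<eta>' e) else 0)"
      unfolding rate_off_to_flip[OF \<sigma> x] w_def
      by (subst power_card_mult_indicator_eq_prod[OF Ex(2)]) auto
  qed
  also have "\<dots> = (\<Sum>\<eta>'\<in>{\<eta>' \<in> E \<rightarrow>\<^sub>E {0, 1}. \<forall>e\<in>E - ?Ex. \<eta>' e = \<eta> e}. \<Prod>e\<in>?Ex. w e (\<eta>' e))"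
    using finite_edge_configs[OF G]
    by (simp add: sum.inter_filter edge_configs_def)
  also have "\<dots> = (\<Sum>h\<in>?Ex \<rightarrow>\<^sub>E {0, 1}. \<Prod>e\<in>?Ex. w e (h e))"
    using \<eta> by (simp add: sum_PiE_agreeing_off[OF Ex(1)] edge_configs_def override_on_def)
  also have "\<dots> = (\<Prod>e\<in>?Ex. w e 0 + w e 1)"
    using prod_sum_PiE[OF Ex(2), of "\<lambda>_. {0, 1}" w] by simp
  also have "\<dots> = (\<Prod>e\<in>?Ex. if delta \<sigma> e = 1 then 1 - p else 1)"
  proof (rule prod.cong[OF refl])
    fix e assume e: "e \<in> ?Ex"
    with G have "delta (flip \<sigma> x) e = 1 - delta \<sigma> e"
      by (intro delta_flip[OF \<sigma>]) (auto simp: finite_graph_def edges_at_def)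
    then show "w e 0 + w e 1 = (if delta \<sigma> e = 1 then 1 - p else 1)"
      by (simp add: w_def delta_def)
  qed
  also have "\<dots> = (1 - p) ^ card {e \<in> ?Ex. delta \<sigma> e = 1}"
    using Ex(2) by (simp add: prod.If_cases Int_def)
  finally show ?thesis .
qed

lemma sum_configs_rate_off:
  assumes G: "finite_graph V E" and \<eta>: "\<eta> \<in> edge_configs E" and \<sigma>: "\<sigma> \<in> spin_configs V"
  shows "(\<Sum>t\<in>configs V E. rate_off p V E (\<eta>, \<sigma>) t) =
    (\<Sum>x\<in>V. (1 - p) ^ card {e \<in> edges_at E x. delta \<sigma> e = 1})"
proof -
  have fin: "finite (edge_configs E)" "finite (spin_configs V)"
    using G finite_edge_configs[OF G] by (simp_all add: finite_spin_configs finite_graph_def)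
  have "(\<Sum>t\<in>configs V E. rate_off p V E (\<eta>, \<sigma>) t) =
      (\<Sum>\<eta>'\<in>edge_configs E. \<Sum>\<sigma>'\<in>spin_configs V. rate_off p V E (\<eta>, \<sigma>) (\<eta>', \<sigma>'))"
    unfolding configs_def by (simp add: sum.cartesian_product)
  also have "\<dots> = (\<Sum>\<sigma>'\<in>spin_configs V. \<Sum>\<eta>'\<in>edge_configs E. rate_off p V E (\<eta>, \<sigma>) (\<eta>', \<sigma>'))"
    by (rule sum.swap)
  also have "\<dots> = (\<Sum>\<sigma>'\<in>flip \<sigma> ` V. \<Sum>\<eta>'\<in>edge_configs E. rate_off p V E (\<eta>, \<sigma>) (\<eta>', \<sigma>'))"
    using fin flip_in_spin_configs[OF \<sigma>]
    by (intro sum.mono_neutral_right) (auto intro!: sum.neutral rate_off_not_flip)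
  also have "\<dots> = (\<Sum>x\<in>V. \<Sum>\<eta>'\<in>edge_configs E. rate_off p V E (\<eta>, \<sigma>) (\<eta>', flip \<sigma> x))"
    by (simp add: sum.reindex inj_on_flip[OF \<sigma>])
  also have "\<dots> = (\<Sum>x\<in>V. (1 - p) ^ card {e \<in> edges_at E x. delta \<sigma> e = 1})"
    by (simp add: sum_rate_off_to_flip[OF G \<eta> \<sigma>])
  finally show ?thesis .
qed

lemma sum_rate_diagonal:
  assumes G: "finite_graph V E" and \<eta>: "\<eta> \<in> edge_configs E" and \<sigma>: "\<sigma> \<in> spin_configs V"
  shows "(\<Sum>\<eta>'\<in>edge_configs E. rate p V E (\<eta>, \<sigma>) (\<eta>', \<sigma>)) =
    - (\<Sum>x\<in>V. (1 - p) ^ card {e \<in> edges_at E x. delta \<sigma> e = 1})"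
proof -
  note fin = finite_configs[OF G] finite_edge_configs[OF G]
  have no_loop: "rate_off p V E (\<eta>, \<sigma>) (\<eta>', \<sigma>) = 0" for \<eta>'
    using flip_neq[OF \<sigma>] by (intro rate_off_not_flip) metis
  have "(\<Sum>\<eta>'\<in>edge_configs E. rate p V E (\<eta>, \<sigma>) (\<eta>', \<sigma>)) = rate p V E (\<eta>, \<sigma>) (\<eta>, \<sigma>)"
    using fin(2) \<eta> by (subst sum.remove[of _ \<eta>]) (auto simp: rate_def no_loop)
  also have "\<dots> = - (\<Sum>t\<in>configs V E. rate_off p V E (\<eta>, \<sigma>) t)"
    using fin(1) by (simp add: rate_def sum_diff1 no_loop)
  finally show ?thesis
    by (simp add: sum_configs_rate_off[OF G \<eta> \<sigma>])
qed

theorem proposition5: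
  fixes V :: "'v set" and E :: "'v set set" and p :: real
    and \<eta> :: "'v set \<Rightarrow> nat" and \<sigma> \<sigma>' :: "'v \<Rightarrow> int"
  assumes "finite_graph V E"
    and "0 \<le> p" and "p \<le> 1"
    and "\<eta> \<in> edge_configs E"
    and "\<sigma> \<in> spin_configs V" and "\<sigma>' \<in> spin_configs V"
  shows "(\<Sum>\<eta>'\<in>edge_configs E. rate p V E (\<eta>, \<sigma>) (\<eta>', \<sigma>')) = spin_rate p V E \<sigma> \<sigma>'"
proof -
  note G = assms(1) and \<eta> = assms(4) and \<sigma> = assms(5)
  consider "\<sigma>' = \<sigma>" | x where "x \<in> V" "\<sigma>' = flip \<sigma> x" | "\<sigma>' \<noteq> \<sigma>" "\<not> (\<exists>x\<in>V. \<sigma>' = flip \<sigma> x)"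
    by blast
  then show ?thesis
  proof cases
    case 1
    then show ?thesis
      by (simp add: sum_rate_diagonal[OF G \<eta> \<sigma>] spin_rate_def)
  next
    case (2 x)
    have "(THE y. y \<in> V \<and> \<sigma>' = flip \<sigma> y) = x"
      using 2 inj_on_flip[OF \<sigma>] by (intro the_equality) (auto dest: inj_onD)
    with 2 show ?thesis
      using flip_neq[OF \<sigma>] sum_rate_off_to_flip[OF G \<eta> \<sigma> 2(1)]
      by (auto simp: rate_def spin_rate_def)
  next
    case 3
    then show ?thesis
      by (simp add: rate_def spin_rate_def rate_off_not_flip)
  qed
qed

end
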